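(* For every integer $n\ge 1$, the vertices of \[\mathrm{Newt}(U_n)=\sum_{1\le i<j\le n}\mathrm{conv}\{e_i+e_{n+j},\,e_j+e_{n+i}\}\subseteq\mathbb{R}^{2n}\] are exactly the points $(\pi,\pi^c)-(1,\dots,1)$ for $\pi\in\mathfrak{S}_n$.
   Context: $e_1,\dots,e_{2n}$ are the standard basis vectors of $\mathbb{R}^{2n}$ and the sum is a Minkowski sum. A permutation $\pi=\pi_1\cdots\pi_n\in\mathfrak{S}_n$ is identified with the vector $(\pi_1,\dots,\pi_n)\in\mathbb{R}^n$, and its complement is $\pi^c=(n+1-\pi_1,\dots,n+1-\pi_n)$; $(\pi,\pi^c)\in\mathbb{R}^{2n}$ is the concatenation and $(1,\dots,1)\in\mathbb{R}^{2n}$. *)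

theory Defs
  imports "HOL-Analysis.Analysis" "HOL-Analysis.Finite_Function_Topology"
          "HOL-Combinatorics.Permutations"
begin

text \<open>We model R^(2n) uniformly in n as finitely supported functions nat =>0 real
  (a real vector space); the coordinate with 1-based index k (1 <= k <= 2n) is stored
  at position k - 1, all other coordinates are zero.\<close>

definition std_basis :: "nat \<Rightarrow> (nat \<Rightarrow>\<^sub>0 real)" where
  "std_basis k = Poly_Mapping.single (k - 1) 1"

definition Newt :: "nat \<Rightarrow> (nat \<Rightarrow>\<^sub>0 real) set" where
  "Newt n = (\<Sum>(i, j)\<in>{(i, j). 1 \<le> i \<and> i < j \<and> j \<le> n}.
      convex hull {std_basis i + std_basis (n + j), std_basis j + std_basis (n + i)})"

definition perm_compl_vec :: "nat \<Rightarrow> (nat \<Rightarrow> nat) \<Rightarrow> (nat \<Rightarrow>\<^sub>0 real)" where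
  "perm_compl_vec n \<pi> =
     (\<Sum>k\<in>{1..n}. real (\<pi> k) *\<^sub>R std_basis k) +
     (\<Sum>k\<in>{1..n}. (real (n + 1) - real (\<pi> k)) *\<^sub>R std_basis (n + k))"

definition ones_vec :: "nat \<Rightarrow> (nat \<Rightarrow>\<^sub>0 real)" where
  "ones_vec n = (\<Sum>k\<in>{1..2 * n}. std_basis k)"

end

theory Submission
  imports Defs
begin

text \<open>Choosing an endpoint of each segment conv{e_i + e_(n+j), e_j + e_(n+i)} orients the
  edge {i, j} of the complete graph on {1..n}, the endpoint e_a + e_(n+b) meaning that a beats b.
  The sum of the chosen endpoints has the out-degrees of the resulting tournament as its first n
  coordinates and the in-degrees as its last n. A vertex of a Minkowski sum is a sum of vertices
  of the summands, so every vertex of Newt(U_n) arises from a tournament. This tournament has no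
  3-cycle a \<rightarrow> b \<rightarrow> c \<rightarrow> a: reversing the arc a \<rightarrow> b, or reversing both b \<rightarrow> c and c \<rightarrow> a,
  moves the point by -D and +D respectively, where D = e_a + e_(n+b) - e_b - e_(n+a), so it
  would be a midpoint. A transitive tournament is the order of a permutation \<pi>, and its score
  vector is (\<pi>, \<pi>^c) - (1, ..., 1). Conversely, for every permutation \<pi> this point is the unique
  maximizer on Newt(U_n) of the linear functional y \<mapsto> \<Sum> \<pi>_m y_m, because on each segment
  the endpoint e_a + e_(n+b) with \<pi>_a > \<pi>_b is the unique maximizer.\<close>

lemma set_sum_memI:
  fixes S :: "'i \<Rightarrow> 'a::comm_monoid_add set"
  assumes "finite I" "\<And>i. i \<in> I \<Longrightarrow> s i \<in> S i"
  shows "(\<Sum>i\<in>I. s i) \<in> (\<Sum>i\<in>I. S i)"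
  using assms unfolding set_sum_alt[OF assms(1)] by blast

lemma extreme_point_of_set_sum:
  fixes S :: "'i \<Rightarrow> 'a::real_vector set"
  assumes I: "finite I" and ext: "(\<Sum>i\<in>I. s i) extreme_point_of (\<Sum>i\<in>I. S i)"
    and s: "\<And>i. i \<in> I \<Longrightarrow> s i \<in> S i" and k: "k \<in> I"
  shows "s k extreme_point_of S k"
  unfolding extreme_point_of_def
proof (intro conjI ballI notI)
  show "s k \<in> S k" using s k .
next
  fix a b assume a: "a \<in> S k" and b: "b \<in> S k" and ab: "s k \<in> open_segment a b"
  define c where "c = (\<Sum>i\<in>I - {k}. s i)"
  have split: "(\<Sum>i\<in>I. (s(k := y)) i) = c + y" for y
    using I k by (simp add: sum.remove c_def)
  have in_sum: "c + y \<in> (\<Sum>i\<in>I. S i)" if "y \<in> S k" for y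
    unfolding split[symmetric] using that s by (intro set_sum_memI[OF I]) auto
  have "(\<Sum>i\<in>I. s i) = c + s k"
    using split[of "s k"] by simp
  moreover have "c + s k \<in> open_segment (c + a) (c + b)"
    using ab by (simp add: open_segment_translation)
  ultimately show False
    using ext in_sum[OF a] in_sum[OF b] unfolding extreme_point_of_def by metis
qed

lemma extreme_point_of_unique_maximizer:
  fixes f :: "'a::real_vector \<Rightarrow> real"
  assumes f: "linear f" and x: "x \<in> S" and max: "\<And>y. y \<in> S \<Longrightarrow> y \<noteq> x \<Longrightarrow> f y < f x"
  shows "x extreme_point_of S"
  unfolding extreme_point_of_def
proof (intro conjI ballI notI)
  fix a b assume a: "a \<in> S" and b: "b \<in> S" and ab: "x \<in> open_segment a b"
  then obtain u where u: "0 < u" "u < 1" and xu: "x = (1 - u) *\<^sub>R a + u *\<^sub>R b"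
    by (auto simp: in_segment)
  have "a \<noteq> x" "b \<noteq> x" using ab by (auto simp: open_segment_def)
  then have "f a < f x" "f b < f x" using max a b by auto
  then have "(1 - u) * f a + u * f b < f x" using u by (intro convex_bound_lt) auto
  then show False using xu by (simp add: linear_add[OF f] linear_cmul[OF f])
qed (rule x)

lemma set_sum_unique_maximizer:
  fixes f :: "'a::real_vector \<Rightarrow> real"
  assumes f: "linear f" and I: "finite I" and g: "\<And>i. i \<in> I \<Longrightarrow> g i \<in> S i"
    and max: "\<And>i y. i \<in> I \<Longrightarrow> y \<in> S i \<Longrightarrow> y \<noteq> g i \<Longrightarrow> f y < f (g i)"
    and y: "y \<in> (\<Sum>i\<in>I. S i)" and ne: "y \<noteq> (\<Sum>i\<in>I. g i)"
  shows "f y < f (\<Sum>i\<in>I. g i)"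
proof -
  obtain s where s: "\<And>i. i \<in> I \<Longrightarrow> s i \<in> S i" and ys: "y = (\<Sum>i\<in>I. s i)"
    using y unfolding set_sum_alt[OF I] by blast
  have le: "f (s i) \<le> f (g i)" if "i \<in> I" for i
    using max[OF that s[OF that]] by (cases "s i = g i") auto
  obtain k where k: "k \<in> I" "s k \<noteq> g k"
    using ne unfolding ys by (meson sum.cong)
  have "(\<Sum>i\<in>I. f (s i)) < (\<Sum>i\<in>I. f (g i))"
    using I le k max[OF k(1) s[OF k(1)]] by (intro sum_strict_mono_ex1) auto
  then show ?thesis
    unfolding ys linear_sum[OF f] .
qed

lemma segment_unique_maximizer:
  fixes f :: "'a::real_vector \<Rightarrow> real"
  assumes f: "linear f" and pq: "f q < f p" and y: "y \<in> convex hull {p, q}" and "y \<noteq> p"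
  shows "f y < f p"
proof -
  obtain u where u: "0 \<le> u" "u \<le> 1" and yu: "y = (1 - u) *\<^sub>R p + u *\<^sub>R q"
    using y unfolding segment_convex_hull[symmetric] in_segment by blast
  with \<open>y \<noteq> p\<close> have "u > 0" by (cases "u = 0") auto
  have "f y = f p - u * (f p - f q)"
    unfolding yu linear_add[OF f] linear_cmul[OF f] by (simp add: algebra_simps)
  also have "\<dots> < f p" using \<open>u > 0\<close> pq by simp
  finally show ?thesis .
qed

lemma sum_fst_eq_card_scaleR:
  fixes f :: "'a \<Rightarrow> 'c::real_vector"
  assumes T: "T \<subseteq> A \<times> B" and "finite A" "finite B"
  shows "(\<Sum>p\<in>T. f (fst p)) = (\<Sum>a\<in>A. real (card {b. (a, b) \<in> T}) *\<^sub>R f a)"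
proof -
  have fin: "finite {b. (a, b) \<in> T}" for a
    using T \<open>finite B\<close> by (rule_tac finite_subset[of _ B]) auto
  have "T = Sigma A (\<lambda>a. {b. (a, b) \<in> T})"
    using T by auto
  then have "(\<Sum>p\<in>T. f (fst p)) = (\<Sum>a\<in>A. \<Sum>b\<in>{b. (a, b) \<in> T}. f a)"
    using sum.Sigma[OF \<open>finite A\<close> ballI[OF fin], of "\<lambda>a b. f a"] by (simp add: case_prod_beta)
  then show ?thesis
    by (simp add: sum_constant_scaleR)
qed

lemma sum_snd_eq_card_scaleR:
  fixes f :: "'a \<Rightarrow> 'c::real_vector"
  assumes T: "T \<subseteq> A \<times> B" and "finite A" "finite B"
  shows "(\<Sum>p\<in>T. f (snd p)) = (\<Sum>b\<in>B. real (card {a. (a, b) \<in> T}) *\<^sub>R f b)"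
proof -
  have "(\<Sum>p\<in>T. f (snd p)) = (\<Sum>p\<in>prod.swap ` T. f (fst p))"
    by (simp add: sum.reindex)
  also have "\<dots> = (\<Sum>b\<in>B. real (card {a. (b, a) \<in> prod.swap ` T}) *\<^sub>R f b)"
    using assms by (intro sum_fst_eq_card_scaleR) auto
  also have "\<dots> = (\<Sum>b\<in>B. real (card {a. (a, b) \<in> T}) *\<^sub>R f b)"
    by (rule sum.cong) (auto intro!: arg_cong[where f = card] image_eqI)
  finally show ?thesis .
qed

definition arc_vec :: "nat \<Rightarrow> nat \<Rightarrow> nat \<Rightarrow> (nat \<Rightarrow>\<^sub>0 real)" where
  "arc_vec n a b = std_basis a + std_basis (n + b)"

definition index_pairs :: "nat \<Rightarrow> (nat \<times> nat) set" where
  "index_pairs n = {(i, j). 1 \<le> i \<and> i < j \<and> j \<le> n}"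

definition pair_segment :: "nat \<Rightarrow> nat \<times> nat \<Rightarrow> (nat \<Rightarrow>\<^sub>0 real) set" where
  "pair_segment n p = convex hull {arc_vec n (fst p) (snd p), arc_vec n (snd p) (fst p)}"

lemma finite_index_pairs: "finite (index_pairs n)"
  by (rule finite_subset[of _ "{1..n} \<times> {1..n}"]) (auto simp: index_pairs_def)

lemma Newt_eq_set_sum: "Newt n = (\<Sum>p\<in>index_pairs n. pair_segment n p)"
  unfolding Newt_def index_pairs_def pair_segment_def arc_vec_def by (simp add: case_prod_beta)

lemma lookup_std_basis: "Poly_Mapping.lookup (std_basis k) m = (if m = k - 1 then 1 else 0)"
  by (simp add: std_basis_def lookup_single)

lemma lookup_scaleR: "Poly_Mapping.lookup (r *\<^sub>R x) i = r * Poly_Mapping.lookup x i"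
proof -
  have "finite {i. r * Poly_Mapping.lookup x i \<noteq> 0}"
    by (rule finite_subset[of _ "Poly_Mapping.keys x"]) (auto simp: in_keys_iff)
  then show ?thesis
    by (simp add: scaleR_poly_mapping_def Abs_poly_mapping_inverse)
qed

lemma arc_vec_swap_neq:
  assumes "a \<in> {1..n}" "b \<in> {1..n}" "a \<noteq> b"
  shows "arc_vec n a b \<noteq> arc_vec n b a"
proof
  assume "arc_vec n a b = arc_vec n b a"
  then have "Poly_Mapping.lookup (arc_vec n a b) (a - 1) = Poly_Mapping.lookup (arc_vec n b a) (a - 1)"
    by simp
  then show False using assms by (auto simp: arc_vec_def lookup_add lookup_std_basis split: if_splits)
qed

definition tournament :: "nat \<Rightarrow> (nat \<times> nat) set \<Rightarrow> bool" where
  "tournament n T \<longleftrightarrow> T \<subseteq> {1..n} \<times> {1..n} \<and>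
     (\<forall>a\<in>{1..n}. \<forall>b\<in>{1..n}. (a, b) \<in> T \<longleftrightarrow> a \<noteq> b \<and> (b, a) \<notin> T)"

definition tournament_vec :: "nat \<Rightarrow> (nat \<times> nat) set \<Rightarrow> (nat \<Rightarrow>\<^sub>0 real)" where
  "tournament_vec n T = (\<Sum>(a, b)\<in>T. arc_vec n a b)"

definition oriented_arc :: "nat \<Rightarrow> (nat \<times> nat) set \<Rightarrow> nat \<times> nat \<Rightarrow> (nat \<Rightarrow>\<^sub>0 real)" where
  "oriented_arc n T p =
     (if p \<in> T then arc_vec n (fst p) (snd p) else arc_vec n (snd p) (fst p))"

definition outdeg :: "(nat \<times> nat) set \<Rightarrow> nat \<Rightarrow> nat" where
  "outdeg T a = card {b. (a, b) \<in> T}"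

lemma tournament_memD:
  assumes "tournament n T" "(a, b) \<in> T"
  shows "a \<in> {1..n}" "b \<in> {1..n}" "a \<noteq> b" "(b, a) \<notin> T"
  using assms unfolding tournament_def by blast+

lemma tournament_total:
  assumes "tournament n T" "a \<in> {1..n}" "b \<in> {1..n}" "a \<noteq> b" "(a, b) \<notin> T"
  shows "(b, a) \<in> T"
  using assms unfolding tournament_def by blast

lemma tournament_finite: "tournament n T \<Longrightarrow> finite T"
  by (rule finite_subset[of _ "{1..n} \<times> {1..n}"]) (auto simp: tournament_def)

lemma oriented_arc_in_pair_segment: "oriented_arc n T p \<in> pair_segment n p"
  unfolding oriented_arc_def pair_segment_def by (auto intro: hull_inc)

lemma bij_betw_orient_index_pairs:
  assumes T: "tournament n T"
  shows "bij_betw (\<lambda>p. if p \<in> T then p else prod.swap p) (index_pairs n) T"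
proof (rule bij_betw_byWitness[where f' = "\<lambda>(a, b). (min a b, max a b)"])
  show "\<forall>p\<in>index_pairs n. (\<lambda>(a, b). (min a b, max a b)) (if p \<in> T then p else prod.swap p) = p"
    by (auto simp: index_pairs_def)
  show "\<forall>p\<in>T. (\<lambda>p. if p \<in> T then p else prod.swap p) ((\<lambda>(a, b). (min a b, max a b)) p) = p"
  proof (clarify)
    fix a b assume ab: "(a, b) \<in> T"
    with tournament_memD[OF T ab] show "(if (min a b, max a b) \<in> T then (min a b, max a b)
        else prod.swap (min a b, max a b)) = (a, b)"
      by (cases "a < b") auto
  qed
  show "(\<lambda>p. if p \<in> T then p else prod.swap p) ` index_pairs n \<subseteq> T"
    using tournament_total[OF T] by (auto simp: index_pairs_def)
  show "(\<lambda>(a, b). (min a b, max a b)) ` T \<subseteq> index_pairs n"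
    using tournament_memD[OF T] by (fastforce simp: index_pairs_def min_def max_def)
qed

lemma sum_oriented_arc:
  assumes "tournament n T"
  shows "(\<Sum>p\<in>index_pairs n. oriented_arc n T p) = tournament_vec n T"
proof -
  have "oriented_arc n T p = (\<lambda>(a, b). arc_vec n a b) (if p \<in> T then p else prod.swap p)" for p
    by (auto simp: oriented_arc_def case_prod_beta)
  then show ?thesis
    unfolding tournament_vec_def
    using sum.reindex_bij_betw[OF bij_betw_orient_index_pairs[OF assms]] by simp
qed

lemma tournament_vec_in_Newt:
  assumes "tournament n T"
  shows "tournament_vec n T \<in> Newt n"
  unfolding sum_oriented_arc[OF assms, symmetric] Newt_eq_set_sum
  by (rule set_sum_memI[OF finite_index_pairs]) (rule oriented_arc_in_pair_segment)

lemma extreme_point_Newt_imp_tournament: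
  assumes ext: "v extreme_point_of Newt n"
  obtains T where "tournament n T" "v = tournament_vec n T"
proof -
  obtain s where s: "\<And>p. p \<in> index_pairs n \<Longrightarrow> s p \<in> pair_segment n p"
    and v: "v = (\<Sum>p\<in>index_pairs n. s p)"
    using extreme_point_of_def[THEN iffD1, OF ext]
    unfolding Newt_eq_set_sum set_sum_alt[OF finite_index_pairs] by blast
  have s_end: "s p = arc_vec n (fst p) (snd p) \<or> s p = arc_vec n (snd p) (fst p)"
    if "p \<in> index_pairs n" for p
    using extreme_point_of_set_sum[OF finite_index_pairs ext[unfolded Newt_eq_set_sum v] s that]
    unfolding pair_segment_def by (auto dest: extreme_point_of_convex_hull)
  define T where "T = {(a, b). a \<in> {1..n} \<and> b \<in> {1..n} \<and> a \<noteq> b \<and>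
                              s (min a b, max a b) = arc_vec n a b}"
  have "tournament n T"
    unfolding tournament_def
  proof (intro conjI ballI)
    show "T \<subseteq> {1..n} \<times> {1..n}" by (auto simp: T_def)
    fix a b assume a: "a \<in> {1..n}" and b: "b \<in> {1..n}"
    show "(a, b) \<in> T \<longleftrightarrow> a \<noteq> b \<and> (b, a) \<notin> T"
    proof (cases "a = b")
      case False
      then have "(min a b, max a b) \<in> index_pairs n"
        using a b by (auto simp: index_pairs_def min_def max_def)
      from s_end[OF this]
      have "s (min a b, max a b) = arc_vec n a b \<or> s (min a b, max a b) = arc_vec n b a"
        by (cases "a < b") (auto simp: min_def max_def)
      then show ?thesis
        using False a b arc_vec_swap_neq[OF a b False] by (auto simp: T_def min.commute max.commute)
    qed (simp add: T_def)
  qed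
  moreover have "s p = oriented_arc n T p" if "p \<in> index_pairs n" for p
    using that s_end[OF that] by (auto simp: oriented_arc_def T_def index_pairs_def)
  then have "v = tournament_vec n T"
    unfolding v sum_oriented_arc[OF \<open>tournament n T\<close>, symmetric] by (rule sum.cong[OF refl])
  ultimately show ?thesis using that by blast
qed

lemma tournament_reverse_arc:
  assumes T: "tournament n T" and ab: "(a, b) \<in> T"
  shows "tournament n (insert (b, a) (T - {(a, b)}))"
    and "tournament_vec n (insert (b, a) (T - {(a, b)})) =
           tournament_vec n T - arc_vec n a b + arc_vec n b a"
proof -
  note ab_facts = tournament_memD[OF T ab]
  then show "tournament n (insert (b, a) (T - {(a, b)}))"
    using T unfolding tournament_def by blast
  show "tournament_vec n (insert (b, a) (T - {(a, b)})) =
           tournament_vec n T - arc_vec n a b + arc_vec n b a"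
    using ab_facts(4) ab tournament_finite[OF T]
    by (simp add: tournament_vec_def sum_diff1 algebra_simps)
qed

lemma extreme_tournament_no_3cycle:
  assumes T: "tournament n T" and ext: "tournament_vec n T extreme_point_of Newt n"
    and ab: "(a, b) \<in> T" and bc: "(b, c) \<in> T"
  shows "(c, a) \<notin> T"
proof
  assume ca: "(c, a) \<in> T"
  define v where "v = tournament_vec n T"
  define D where "D = arc_vec n a b - arc_vec n b a"
  have "D \<noteq> 0"
    using arc_vec_swap_neq[OF tournament_memD(1-3)[OF T ab]] by (simp add: D_def)
  have "v - D \<in> Newt n"
    using tournament_vec_in_Newt[OF tournament_reverse_arc(1)[OF T ab]] tournament_reverse_arc(2)[OF T ab]
    by (simp add: v_def D_def algebra_simps)
  moreover have "v + D \<in> Newt n"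
  proof -
    define T\<^sub>1 where "T\<^sub>1 = insert (c, b) (T - {(b, c)})"
    have T\<^sub>1: "tournament n T\<^sub>1" "tournament_vec n T\<^sub>1 = v - arc_vec n b c + arc_vec n c b"
      using tournament_reverse_arc[OF T bc] by (simp_all add: T\<^sub>1_def v_def)
    have "(c, a) \<in> T\<^sub>1" using ca tournament_memD(3)[OF T bc] by (simp add: T\<^sub>1_def)
    note reversed = tournament_reverse_arc[OF T\<^sub>1(1) this]
    have "v + D = tournament_vec n T\<^sub>1 - arc_vec n c a + arc_vec n a c"
      unfolding T\<^sub>1(2) D_def arc_vec_def by (simp add: algebra_simps)
    then show ?thesis
      using tournament_vec_in_Newt[OF reversed(1)] reversed(2) by simp
  qed
  moreover have "v \<in> open_segment (v - D) (v + D)"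
  proof -
    have "midpoint (v - D) (v + D) = v"
      by (simp add: midpoint_eq_iff)
    then show ?thesis
      using midpoint_in_open_segment[of "v - D" "v + D"] \<open>D \<noteq> 0\<close> by simp
  qed
  ultimately show False
    using ext unfolding v_def extreme_point_of_def by blast
qed

lemma tournament_no_3cycle_imp_trans:
  assumes T: "tournament n T" and no3: "\<And>a b c. (a, b) \<in> T \<Longrightarrow> (b, c) \<in> T \<Longrightarrow> (c, a) \<notin> T"
  shows "trans T"
proof (rule transI)
  fix a b c assume ab: "(a, b) \<in> T" and bc: "(b, c) \<in> T"
  have "a \<noteq> c" using tournament_memD(4)[OF T ab] bc by blast
  then show "(a, c) \<in> T"
    using tournament_total[OF T tournament_memD(2)[OF T bc] tournament_memD(1)[OF T ab]] no3[OF ab bc]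
    by blast
qed

lemma tournament_vec_eq_scores:
  assumes "T \<subseteq> {1..n} \<times> {1..n}"
  shows "tournament_vec n T =
           (\<Sum>a\<in>{1..n}. real (outdeg T a) *\<^sub>R std_basis a) +
           (\<Sum>b\<in>{1..n}. real (card {a. (a, b) \<in> T}) *\<^sub>R std_basis (n + b))"
  unfolding tournament_vec_def arc_vec_def case_prod_beta sum.distrib outdeg_def
  using sum_fst_eq_card_scaleR[OF assms, of std_basis]
    sum_snd_eq_card_scaleR[OF assms, of "\<lambda>b. std_basis (n + b)"] by simp

lemma tournament_indeg_add_outdeg:
  assumes T: "tournament n T" and a: "a \<in> {1..n}"
  shows "card {b. (b, a) \<in> T} + outdeg T a = n - 1"
proof -
  have "{b. (b, a) \<in> T} \<union> {b. (a, b) \<in> T} = {1..n} - {a}"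
    and "{b. (b, a) \<in> T} \<inter> {b. (a, b) \<in> T} = {}"
    using T a unfolding tournament_def by blast+
  then have "card {b. (b, a) \<in> T} + card {b. (a, b) \<in> T} = card ({1..n} - {a})"
    by (metis card_Un_disjoint finite_Diff finite_Un finite_atLeastAtMost)
  then show ?thesis
    using a by (simp add: outdeg_def)
qed

lemma perm_compl_vec_minus_ones:
  "perm_compl_vec n \<pi> - ones_vec n =
     (\<Sum>k\<in>{1..n}. (real (\<pi> k) - 1) *\<^sub>R std_basis k) +
     (\<Sum>k\<in>{1..n}. (real n - real (\<pi> k)) *\<^sub>R std_basis (n + k))"
proof -
  have "ones_vec n = (\<Sum>k\<in>{1..n}. std_basis k) + (\<Sum>k\<in>{1 + n..n + n}. std_basis k)"
    unfolding ones_vec_def mult_2 by (subst sum.ub_add_nat) simp_all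
  also have "(\<Sum>k\<in>{1 + n..n + n}. std_basis k) = (\<Sum>k\<in>{1..n}. std_basis (n + k))"
    by (simp only: sum.shift_bounds_cl_nat_ivl add.commute)
  finally have "ones_vec n = (\<Sum>k\<in>{1..n}. std_basis k) + (\<Sum>k\<in>{1..n}. std_basis (n + k))" .
  then show ?thesis
    unfolding perm_compl_vec_def
    by (simp add: scaleR_diff_left sum_subtractf sum.distrib algebra_simps)
qed

lemma tournament_vec_eq_perm_compl_vec:
  assumes T: "tournament n T" and \<pi>: "\<And>a. a \<in> {1..n} \<Longrightarrow> \<pi> a = outdeg T a + 1"
  shows "tournament_vec n T = perm_compl_vec n \<pi> - ones_vec n"
proof -
  have out: "real (outdeg T a) = real (\<pi> a) - 1"
    and "in": "real (card {b. (b, a) \<in> T}) = real n - real (\<pi> a)"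
    if a: "a \<in> {1..n}" for a
    using \<pi>[OF a] tournament_indeg_add_outdeg[OF T a] a by auto
  have T_sub: "T \<subseteq> {1..n} \<times> {1..n}"
    using tournament_memD[OF T] by auto
  show ?thesis
    unfolding perm_compl_vec_minus_ones tournament_vec_eq_scores[OF T_sub]
    by (intro arg_cong2[where f = "(+)"] sum.cong refl) (simp_all only: out "in")
qed

lemma transitive_tournament_outdeg_permutes:
  assumes T: "tournament n T" and "trans T"
  shows "(\<lambda>a. if a \<in> {1..n} then outdeg T a + 1 else a) permutes {1..n}"
    (is "?\<pi> permutes _")
proof -
  have out_sub: "{b. (a, b) \<in> T} \<subseteq> {1..n} - {a}" for a
    using T unfolding tournament_def by blast
  have outdeg_less: "outdeg T b < outdeg T a" if ab: "(a, b) \<in> T" for a b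
    unfolding outdeg_def
  proof (rule psubset_card_mono)
    show "finite {c. (a, c) \<in> T}"
      using out_sub by (rule finite_subset) simp
    show "{c. (b, c) \<in> T} \<subset> {c. (a, c) \<in> T}"
      using ab out_sub[of b] \<open>trans T\<close> by (blast dest: transD)
  qed
  have img: "?\<pi> ` {1..n} \<subseteq> {1..n}"
  proof -
    have "outdeg T a + 1 \<le> n" if "a \<in> {1..n}" for a
      using card_mono[OF _ out_sub[of a]] that by (simp add: outdeg_def) linarith
    then show ?thesis by auto
  qed
  have inj: "inj_on ?\<pi> {1..n}"
  proof (rule inj_onI)
    fix a b assume a: "a \<in> {1..n}" and b: "b \<in> {1..n}" and eq: "?\<pi> a = ?\<pi> b"
    show "a = b"
    proof (rule ccontr)
      assume "a \<noteq> b"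
      then have "(a, b) \<in> T \<or> (b, a) \<in> T"
        using tournament_total[OF T a b] by blast
      moreover have "outdeg T a = outdeg T b"
        using eq a b by simp
      ultimately show False
        by (auto dest: outdeg_less)
    qed
  qed
  then have "bij_betw ?\<pi> {1..n} {1..n}"
    using endo_inj_surj[OF finite_atLeastAtMost img inj] by (simp add: bij_betw_def)
  then show ?thesis
    by (rule bij_imp_permutes) auto
qed

definition perm_tournament :: "nat \<Rightarrow> (nat \<Rightarrow> nat) \<Rightarrow> (nat \<times> nat) set" where
  "perm_tournament n \<pi> = {(a, b). a \<in> {1..n} \<and> b \<in> {1..n} \<and> \<pi> b < \<pi> a}"

lemma tournament_perm_tournament:
  assumes "\<pi> permutes {1..n}"
  shows "tournament n (perm_tournament n \<pi>)"
  unfolding tournament_def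
proof (intro conjI ballI)
  show "perm_tournament n \<pi> \<subseteq> {1..n} \<times> {1..n}"
    by (auto simp: perm_tournament_def)
  fix a b assume "a \<in> {1..n}" "b \<in> {1..n}"
  moreover have "\<pi> a \<noteq> \<pi> b" if "a \<noteq> b"
    using permutes_inj[OF assms] that by (auto dest: injD)
  ultimately show "(a, b) \<in> perm_tournament n \<pi> \<longleftrightarrow> a \<noteq> b \<and> (b, a) \<notin> perm_tournament n \<pi>"
    by (auto simp: perm_tournament_def)
qed

lemma outdeg_perm_tournament:
  assumes \<pi>: "\<pi> permutes {1..n}" and a: "a \<in> {1..n}"
  shows "\<pi> a = outdeg (perm_tournament n \<pi>) a + 1"
proof -
  have "\<pi> a \<in> {1..n}"
    using permutes_in_image[OF \<pi>] a by simp
  have "\<pi> ` {b \<in> {1..n}. \<pi> b < \<pi> a} = {c \<in> \<pi> ` {1..n}. c < \<pi> a}"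
    by blast
  also have "\<dots> = {1..<\<pi> a}"
    using permutes_image[OF \<pi>] \<open>\<pi> a \<in> {1..n}\<close> by auto
  finally have "\<pi> ` {b \<in> {1..n}. \<pi> b < \<pi> a} = {1..<\<pi> a}" .
  moreover have "inj_on \<pi> {b \<in> {1..n}. \<pi> b < \<pi> a}"
    using permutes_inj_on[OF \<pi>] .
  moreover have "\<pi> a \<ge> 1"
    using \<open>\<pi> a \<in> {1..n}\<close> by simp
  moreover have "{b. (a, b) \<in> perm_tournament n \<pi>} = {b \<in> {1..n}. \<pi> b < \<pi> a}"
    using a by (auto simp: perm_tournament_def)
  ultimately show ?thesis
    unfolding outdeg_def by (metis card_image card_atLeastLessThan le_add_diff_inverse2)
qed

definition perm_weight :: "nat \<Rightarrow> (nat \<Rightarrow> nat) \<Rightarrow> (nat \<Rightarrow>\<^sub>0 real) \<Rightarrow> real" where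
  "perm_weight n \<pi> y = (\<Sum>m\<in>{1..n}. real (\<pi> m) * Poly_Mapping.lookup y (m - 1))"

lemma linear_perm_weight: "linear (perm_weight n \<pi>)"
  by (rule linearI)
    (simp_all add: perm_weight_def lookup_add lookup_scaleR sum.distrib sum_distrib_left algebra_simps)

lemma perm_weight_arc_vec:
  assumes "a \<in> {1..n}" "b \<ge> 1"
  shows "perm_weight n \<pi> (arc_vec n a b) = real (\<pi> a)"
proof -
  have "perm_weight n \<pi> (arc_vec n a b) = (\<Sum>m\<in>{1..n}. if m = a then real (\<pi> m) else 0)"
    unfolding perm_weight_def
    by (rule sum.cong) (use assms in \<open>auto simp: arc_vec_def lookup_add lookup_std_basis\<close>)
  also have "\<dots> = real (\<pi> a)"
    using assms by simp
  finally show ?thesis .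
qed

lemma perm_weight_pair_segment_unique_maximizer:
  assumes \<pi>: "\<pi> permutes {1..n}" and p: "p \<in> index_pairs n"
    and y: "y \<in> pair_segment n p" "y \<noteq> oriented_arc n (perm_tournament n \<pi>) p"
  shows "perm_weight n \<pi> y < perm_weight n \<pi> (oriented_arc n (perm_tournament n \<pi>) p)"
proof -
  obtain i j where ij: "p = (i, j)" "i \<in> {1..n}" "j \<in> {1..n}" "i \<noteq> j"
    using p by (auto simp: index_pairs_def)
  then have "\<pi> i \<noteq> \<pi> j"
    using permutes_inj[OF \<pi>] by (auto dest: injD)
  then consider "\<pi> j < \<pi> i" | "\<pi> i < \<pi> j"
    by linarith
  then show ?thesis
  proof cases
    case 1
    then have "perm_weight n \<pi> (arc_vec n j i) < perm_weight n \<pi> (arc_vec n i j)"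
      using ij perm_weight_arc_vec by simp
    moreover have "oriented_arc n (perm_tournament n \<pi>) p = arc_vec n i j"
      using 1 ij by (simp add: oriented_arc_def perm_tournament_def)
    ultimately show ?thesis
      using y ij segment_unique_maximizer[OF linear_perm_weight] by (simp add: pair_segment_def)
  next
    case 2
    then have "perm_weight n \<pi> (arc_vec n i j) < perm_weight n \<pi> (arc_vec n j i)"
      using ij perm_weight_arc_vec by simp
    moreover have "oriented_arc n (perm_tournament n \<pi>) p = arc_vec n j i"
      using 2 ij by (simp add: oriented_arc_def perm_tournament_def)
    ultimately show ?thesis
      using y ij segment_unique_maximizer[OF linear_perm_weight]
      by (simp add: pair_segment_def insert_commute)
  qed
qed

lemma extreme_point_perm_tournament_vec:
  assumes \<pi>: "\<pi> permutes {1..n}"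
  shows "tournament_vec n (perm_tournament n \<pi>) extreme_point_of Newt n"
proof (rule extreme_point_of_unique_maximizer[OF linear_perm_weight])
  let ?T = "perm_tournament n \<pi>"
  show "tournament_vec n ?T \<in> Newt n"
    by (rule tournament_vec_in_Newt[OF tournament_perm_tournament[OF \<pi>]])
  fix y assume "y \<in> Newt n" "y \<noteq> tournament_vec n ?T"
  then show "perm_weight n \<pi> y < perm_weight n \<pi> (tournament_vec n ?T)"
    unfolding sum_oriented_arc[OF tournament_perm_tournament[OF \<pi>], symmetric] Newt_eq_set_sum
    using perm_weight_pair_segment_unique_maximizer[OF \<pi>] oriented_arc_in_pair_segment
    by (intro set_sum_unique_maximizer[OF linear_perm_weight finite_index_pairs])
qed

theorem mainTheorem4:
  fixes n :: nat
  assumes "n \<ge> 1"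
  shows "{v. v extreme_point_of Newt n} =
         {perm_compl_vec n \<pi> - ones_vec n | \<pi>. \<pi> permutes {1..n}}"
proof (intro equalityI subsetI)
  fix v assume "v \<in> {v. v extreme_point_of Newt n}"
  then have ext: "v extreme_point_of Newt n" by simp
  then obtain T where T: "tournament n T" and v: "v = tournament_vec n T"
    by (rule extreme_point_Newt_imp_tournament)
  have "trans T"
    using T extreme_tournament_no_3cycle[OF T ext[unfolded v]] by (rule tournament_no_3cycle_imp_trans)
  define \<pi> where "\<pi> a = (if a \<in> {1..n} then outdeg T a + 1 else a)" for a
  have "\<pi> permutes {1..n}"
    unfolding \<pi>_def using T \<open>trans T\<close> by (rule transitive_tournament_outdeg_permutes)
  moreover have "v = perm_compl_vec n \<pi> - ones_vec n"
    unfolding v by (rule tournament_vec_eq_perm_compl_vec[OF T]) (simp add: \<pi>_def)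
  ultimately show "v \<in> {perm_compl_vec n \<pi> - ones_vec n | \<pi>. \<pi> permutes {1..n}}"
    by blast
next
  fix v assume "v \<in> {perm_compl_vec n \<pi> - ones_vec n | \<pi>. \<pi> permutes {1..n}}"
  then obtain \<pi> where \<pi>: "\<pi> permutes {1..n}" and v: "v = perm_compl_vec n \<pi> - ones_vec n"
    by blast
  have "v = tournament_vec n (perm_tournament n \<pi>)"
    unfolding v using tournament_perm_tournament[OF \<pi>] outdeg_perm_tournament[OF \<pi>]
    by (rule tournament_vec_eq_perm_compl_vec[symmetric])
  then show "v \<in> {v. v extreme_point_of Newt n}"
    using extreme_point_perm_tournament_vec[OF \<pi>] by simp
qed

end
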